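(* Let $n\ge 2$ and $k\in\{0,\dots,n-1\}$, and let $\vec m=(m_1,\dots,m_{n-1})^t\in\mathbb{Z}_{\ge0}^{n-1}$ satisfy $k+\sum_{i=1}^{n-1} i\,m_i\equiv 0 \pmod n$. Put $N=\sum_{i=1}^{n-1}m_i$ and define heights $h_1,\dots,h_N$ by: $h_1=\dots=h_{m_{n-1}}=n-1$, the next $m_{n-2}$ of them equal $n-2$, and so on, the last $m_1$ of them equal $1$ (i.e. the sequence is weakly decreasing and the value $i$ occurs exactly $m_i$ times). Put $h_0=n$ and $w_a=2n-h_{a-1}-h_a$ for $1\le a\le N$. Then the parent graph associated to $\vec m$, i.e. the Ferrers graph with interpolating matrix $\begin{pmatrix} w_1&\cdots&w_N\\ h_1&\cdots&h_N\end{pmatrix}$, has $$\sum_{a=1}^{N} h_a\,(w_1+w_2+\dots+w_a)=n\,\vec m^{\,t}C^{-1}\vec m$$ nodes, where $C$ is the Cartan matrix of $sl(n)$.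
   Context: $C$ is the $(n-1)\times(n-1)$ Cartan matrix of $sl(n)$, $C_{ij}=2\delta_{i,j}-\delta_{i,j-1}-\delta_{i,j+1}$, whose inverse is $(C^{-1})_{ij}=i(n-j)/n$ for $i\le j$ and $j(n-i)/n$ for $i>j$. The Ferrers graph with interpolating matrix $\begin{pmatrix} w_1&\cdots&w_N\\ h_1&\cdots&h_N\end{pmatrix}$ (positive integers) is the diagram whose profile, starting from $(0,-H)$ with $H=\sum h_a$, moves $w_1$ steps right, $h_1$ steps up, $w_2$ steps right, etc., ending at $(W,0)$ with $W=\sum w_a$; its number of nodes is $\sum_{a=1}^N h_a(w_1+\dots+w_a)$. *)

theory Defs
  imports Main Complex_Main
begin

text \<open>Cartan matrix of sl(n), indices 1..n-1 (entries as in the paper).\<close>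
definition cartan :: "nat \<Rightarrow> nat \<Rightarrow> nat \<Rightarrow> real" where
  "cartan n i j = (if i = j then 2 else if i + 1 = j \<or> j + 1 = i then -1 else 0)"

definition cartan_inv :: "nat \<Rightarrow> nat \<Rightarrow> nat \<Rightarrow> real" where
  "cartan_inv n i j = (if i \<le> j then real i * real (n - j) / real n
                       else real j * real (n - i) / real n)"

definition ferrers_nodes :: "nat \<Rightarrow> (nat \<Rightarrow> int) \<Rightarrow> (nat \<Rightarrow> int) \<Rightarrow> int" where
  "ferrers_nodes N w h = (\<Sum>a=1..N. h a * (\<Sum>b=1..a. w b))"

end

theory Submission
  imports Defs
begin

text \<open>Write S(a) = h(1) + ... + h(a). The relation w(b) = 2n - h(b-1) - h(b) telescopes to
  w(1) + ... + w(a) = (2a - 1) n - h(a) - 2 S(a-1), so the number of nodes is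
  n (sum over a of (2a - 1) h(a)) - S(N)^2. For a weakly decreasing sequence the sum of
  (2a - 1) h(a) equals the sum of min(h(a), h(b)) over all pairs (a, b), and grouping the indices
  by the value of h turns the count into n (sum of m_i m_j min(i, j)) - (sum of i m_i)^2.
  This is n m^t C^-1 m, because n (C^-1)_ij = n min(i, j) - i j.\<close>

lemma sum_comp_eq_sum_card_fibres:
  fixes f :: "'a \<Rightarrow> 'c" and g :: "'c \<Rightarrow> 'b::comm_semiring_1"
  assumes "finite A" "finite B" "f ` A \<subseteq> B"
  shows "(\<Sum>a\<in>A. g (f a)) = (\<Sum>i\<in>B. of_nat (card {a\<in>A. f a = i}) * g i)"
proof -
  have "(\<Sum>a\<in>A. g (f a)) = (\<Sum>i\<in>B. \<Sum>a\<in>{a\<in>A. f a = i}. g (f a))"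
    using sum.group[OF assms, of "\<lambda>a. g (f a)"] by simp
  also have "\<dots> = (\<Sum>i\<in>B. of_nat (card {a\<in>A. f a = i}) * g i)"
    by (rule sum.cong) auto
  finally show ?thesis .
qed

lemma double_sum_comp_eq_sum_card_fibres:
  fixes f :: "'a \<Rightarrow> 'c" and g :: "'c \<Rightarrow> 'c \<Rightarrow> 'b::comm_semiring_1"
  assumes "finite A" "finite B" "f ` A \<subseteq> B"
  shows "(\<Sum>a\<in>A. \<Sum>b\<in>A. g (f a) (f b))
       = (\<Sum>i\<in>B. \<Sum>j\<in>B. of_nat (card {a\<in>A. f a = i}) * of_nat (card {a\<in>A. f a = j}) * g i j)"
proof -
  let ?c = "\<lambda>i. of_nat (card {a\<in>A. f a = i}) :: 'b"
  have "(\<Sum>a\<in>A. \<Sum>b\<in>A. g (f a) (f b)) = (\<Sum>a\<in>A. \<Sum>j\<in>B. ?c j * g (f a) j)"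
    using sum_comp_eq_sum_card_fibres[OF assms] by (intro sum.cong) auto
  also have "\<dots> = (\<Sum>i\<in>B. ?c i * (\<Sum>j\<in>B. ?c j * g i j))"
    by (rule sum_comp_eq_sum_card_fibres[OF assms])
  finally show ?thesis
    by (simp add: sum_distrib_left mult.assoc mult.left_commute)
qed

lemma sum_const_minus_adjacent:
  fixes h :: "nat \<Rightarrow> 'a::comm_ring_1"
  assumes "1 \<le> a"
  shows "(\<Sum>b=1..a. c - h (b - 1) - h b) = of_nat a * c - h 0 - h a - 2 * (\<Sum>b=1..a-1. h b)"
  using assms
proof (induction a rule: nat_induct_at_least)
  case (Suc a)
  have "(\<Sum>b=1..a. h b) = (\<Sum>b=1..a-1. h b) + h a"
    using Suc.hyps by (cases a) auto
  with Suc.IH show ?case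
    by (simp add: algebra_simps)
qed simp

lemma power2_sum_eq_sum_prefix:
  fixes h :: "nat \<Rightarrow> 'a::comm_semiring_1"
  shows "(\<Sum>a=1..N. h a * (h a + 2 * (\<Sum>b=1..a-1. h b))) = (\<Sum>a=1..N. h a)\<^sup>2"
  by (induction N) (simp_all add: power2_eq_square mult_2 algebra_simps)

lemma sum_min_antimono:
  fixes h :: "nat \<Rightarrow> 'a::linordered_idom"
  assumes "\<forall>a\<in>{1..N}. \<forall>b\<in>{1..N}. a \<le> b \<longrightarrow> h b \<le> h a"
  shows "(\<Sum>a=1..N. \<Sum>b=1..N. min (h a) (h b)) = (\<Sum>a=1..N. h a * (2 * of_nat a - 1))"
  using assms
proof (induction N)
  case (Suc N)
  have last_min: "min (h b) (h (Suc N)) = h (Suc N) \<and> min (h (Suc N)) (h b) = h (Suc N)"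
    if "b \<in> {1..N}" for b
  proof -
    have "h (Suc N) \<le> h b"
      using Suc.prems that by auto
    then show ?thesis
      by (simp add: min_def)
  qed
  have "(\<Sum>a=1..Suc N. \<Sum>b=1..Suc N. min (h a) (h b))
      = (\<Sum>a=1..N. \<Sum>b=1..N. min (h a) (h b)) + (\<Sum>a=1..N. min (h a) (h (Suc N)))
        + (\<Sum>b=1..N. min (h (Suc N)) (h b)) + h (Suc N)"
    by (simp add: sum.distrib)
  also have "\<dots> = (\<Sum>a=1..N. h a * (2 * of_nat a - 1)) + of_nat (2 * N + 1) * h (Suc N)"
    using Suc by (simp add: last_min algebra_simps)
  finally show ?case
    by (simp add: algebra_simps)
qed simp

lemma ferrers_nodes_eq_sum_min:
  fixes n :: int and h w :: "nat \<Rightarrow> int"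
  assumes h0: "h 0 = n"
    and w: "\<forall>a\<in>{1..N}. w a = 2 * n - h (a - 1) - h a"
    and h_mono: "\<forall>a\<in>{1..N}. \<forall>b\<in>{1..N}. a \<le> b \<longrightarrow> h b \<le> h a"
  shows "ferrers_nodes N w h = n * (\<Sum>a=1..N. \<Sum>b=1..N. min (h a) (h b)) - (\<Sum>a=1..N. h a)\<^sup>2"
proof -
  have prefix_w: "(\<Sum>b=1..a. w b) = (2 * of_nat a - 1) * n - h a - 2 * (\<Sum>b=1..a-1. h b)"
    if "a \<in> {1..N}" for a
  proof -
    have "(\<Sum>b=1..a. w b) = (\<Sum>b=1..a. 2 * n - h (b - 1) - h b)"
      using w that by (intro sum.cong) auto
    also have "\<dots> = of_nat a * (2 * n) - h 0 - h a - 2 * (\<Sum>b=1..a-1. h b)"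
      using that by (intro sum_const_minus_adjacent) simp
    finally show ?thesis
      by (simp add: h0 algebra_simps)
  qed
  have "ferrers_nodes N w h
      = (\<Sum>a=1..N. n * (h a * (2 * of_nat a - 1)) - h a * (h a + 2 * (\<Sum>b=1..a-1. h b)))"
    unfolding ferrers_nodes_def
  proof (rule sum.cong)
    fix a
    assume "a \<in> {1..N}"
    then show "h a * sum w {1..a}
             = n * (h a * (2 * of_nat a - 1)) - h a * (h a + 2 * (\<Sum>b=1..a-1. h b))"
      by (simp only: prefix_w) (simp add: algebra_simps)
  qed simp
  also have "\<dots> = n * (\<Sum>a=1..N. h a * (2 * of_nat a - 1))
                   - (\<Sum>a=1..N. h a * (h a + 2 * (\<Sum>b=1..a-1. h b)))"
    by (simp add: sum_subtractf sum_distrib_left)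
  finally show ?thesis
    by (simp only: power2_sum_eq_sum_prefix sum_min_antimono[OF h_mono])
qed

lemma cartan_inv_eq_min:
  assumes "i \<le> n" "j \<le> n" "0 < n"
  shows "real n * cartan_inv n i j = real n * real (min i j) - real i * real j"
  using assms by (auto simp: cartan_inv_def of_nat_diff field_simps min_def)

lemma cartan_inv_quadratic_form:
  fixes m :: "nat \<Rightarrow> real"
  assumes "0 < n"
  shows "real n * (\<Sum>i=1..n-1. \<Sum>j=1..n-1. m i * cartan_inv n i j * m j)
       = real n * (\<Sum>i=1..n-1. \<Sum>j=1..n-1. m i * m j * real (min i j)) - (\<Sum>i=1..n-1. real i * m i)\<^sup>2"
proof -
  have "real n * (\<Sum>i=1..n-1. \<Sum>j=1..n-1. m i * cartan_inv n i j * m j)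
      = (\<Sum>i=1..n-1. \<Sum>j=1..n-1. m i * m j * (real n * real (min i j) - real i * real j))"
    unfolding sum_distrib_left
    by (intro sum.cong refl) (use assms in \<open>auto simp: cartan_inv_eq_min[symmetric]\<close>)
  then show ?thesis
    by (simp add: power2_eq_square sum_product sum_distrib_left sum_subtractf[symmetric] algebra_simps)
qed

theorem lemma1:
  fixes n k N :: nat and m h :: "nat \<Rightarrow> nat" and w :: "nat \<Rightarrow> int"
  assumes n2: "n \<ge> 2"
    and k: "k < n"
    and cong: "(k + (\<Sum>i=1..n-1. i * m i)) mod n = 0"
    and N_def: "N = (\<Sum>i=1..n-1. m i)"
    and h0: "h 0 = n"
    and h_range: "\<forall>a\<in>{1..N}. 1 \<le> h a \<and> h a \<le> n - 1"
    and h_mono: "\<forall>a\<in>{1..N}. \<forall>b\<in>{1..N}. a \<le> b \<longrightarrow> h b \<le> h a"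
    and h_count: "\<forall>i\<in>{1..n-1}. card {a\<in>{1..N}. h a = i} = m i"
    and w_def: "\<forall>a\<in>{1..N}. w a = 2 * int n - int (h (a - 1)) - int (h a)"
  shows "real_of_int (ferrers_nodes N w (\<lambda>a. int (h a)))
           = real n * (\<Sum>i=1..n-1. \<Sum>j=1..n-1. real (m i) * cartan_inv n i j * real (m j))"
proof -
  have h_image: "h ` {1..N} \<subseteq> {1..n-1}"
    using h_range by auto
  have "ferrers_nodes N w (\<lambda>a. int (h a))
      = int n * (\<Sum>a=1..N. \<Sum>b=1..N. int (min (h a) (h b))) - (\<Sum>a=1..N. int (h a))\<^sup>2"
    using ferrers_nodes_eq_sum_min[of "\<lambda>a. int (h a)"] h0 w_def h_mono by (simp add: of_nat_min)
  also have "(\<Sum>a=1..N. \<Sum>b=1..N. int (min (h a) (h b)))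
      = (\<Sum>i=1..n-1. \<Sum>j=1..n-1. int (m i) * int (m j) * int (min i j))"
    using double_sum_comp_eq_sum_card_fibres[OF _ _ h_image, of "\<lambda>i j. int (min i j)"] h_count
    by simp
  also have "(\<Sum>a=1..N. int (h a)) = (\<Sum>i=1..n-1. int i * int (m i))"
    using sum_comp_eq_sum_card_fibres[OF _ _ h_image, of int] h_count
    by (simp add: mult.commute)
  finally show ?thesis
    using cartan_inv_quadratic_form[of n "\<lambda>i. real (m i)"] n2 by simp
qed

end
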